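(* Let $a(x,x')$ be a transition density with respect to $\mu$ on a complete separable metric state space such that $x\mapsto a(x,\cdot)$ is continuous into $L_1(\mu)$. For a probability density $g$, let $X_1,\dots,X_N$ be i.i.d. from $g$. Then for every $\varepsilon>0$, $\mathbf P[\|A^*E_N(g)-A^*g\|_1>\varepsilon]\to0$ exponentially fast in $N$. The convergence is uniform over all densities $g$ with $\int_Kg\,d\mu\ge1-\varepsilon/6$ for a fixed compact set $K$: i.e. for each $\varepsilon>0$ and compact $K$ there are constants $c_1,c_2>0$ such that $\mathbf P[\|A^*E_N(g)-A^*g\|_1>\varepsilon]\le c_1e^{-c_2N}$ for all $N$ and all such $g$.
   Context: $A^*f(x)=\int f(x')a(x',x)\,d\mu(x')$ (extended to probability measures), $E_N(g)$ is the empirical distribution of $X_1,\dots,X_N$, so $A^*E_N(g)(x)=\frac1N\sum_{i=1}^Na(X_i,x)$; $\|\cdot\|_1$ is the $L_1(\mu)$ norm. *)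

theory Defs
  imports "HOL-Probability.Probability"
begin

definition transition_density :: "'a measure \<Rightarrow> ('a \<Rightarrow> 'a \<Rightarrow> real) \<Rightarrow> bool" where
  "transition_density \<mu> a \<longleftrightarrow>
     (\<lambda>(x, x'). a x x') \<in> borel_measurable (\<mu> \<Otimes>\<^sub>M \<mu>) \<and>
     (\<forall>x x'. 0 \<le> a x x') \<and>
     (\<forall>x \<in> space \<mu>. (\<integral>\<^sup>+ x'. ennreal (a x x') \<partial>\<mu>) = 1)"

definition L1_continuous_kernel :: "'a::topological_space measure \<Rightarrow> ('a \<Rightarrow> 'a \<Rightarrow> real) \<Rightarrow> bool" where
  "L1_continuous_kernel \<mu> a \<longleftrightarrow>
     (\<forall>x. ((\<lambda>y. \<integral>\<^sup>+ x'. ennreal \<bar>a y x' - a x x'\<bar> \<partial>\<mu>) \<longlongrightarrow> 0) (at x))"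

definition prob_density :: "'a measure \<Rightarrow> ('a \<Rightarrow> real) \<Rightarrow> bool" where
  "prob_density \<mu> g \<longleftrightarrow> g \<in> borel_measurable \<mu> \<and> (\<forall>x. 0 \<le> g x) \<and>
     (\<integral>\<^sup>+ x. ennreal (g x) \<partial>\<mu>) = 1"

definition adj_op :: "'a measure \<Rightarrow> ('a \<Rightarrow> 'a \<Rightarrow> real) \<Rightarrow> ('a \<Rightarrow> real) \<Rightarrow> 'a \<Rightarrow> real" where
  "adj_op \<mu> a g x = (\<integral> x'. g x' * a x' x \<partial>\<mu>)"

definition adj_emp :: "('a \<Rightarrow> 'a \<Rightarrow> real) \<Rightarrow> nat \<Rightarrow> (nat \<Rightarrow> 'a) \<Rightarrow> 'a \<Rightarrow> real" where
  "adj_emp a N X x = (\<Sum>i<N. a (X i) x) / real N"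

definition L1_norm :: "'a measure \<Rightarrow> ('a \<Rightarrow> real) \<Rightarrow> ennreal" where
  "L1_norm \<mu> f = (\<integral>\<^sup>+ x. ennreal \<bar>f x\<bar> \<partial>\<mu>)"

definition sample_space :: "'a measure \<Rightarrow> ('a \<Rightarrow> real) \<Rightarrow> nat \<Rightarrow> (nat \<Rightarrow> 'a) measure" where
  "sample_space \<mu> g N = PiM {..<N} (\<lambda>_. density \<mu> (\<lambda>x. ennreal (g x)))"

definition dev_prob :: "'a measure \<Rightarrow> ('a \<Rightarrow> 'a \<Rightarrow> real) \<Rightarrow> ('a \<Rightarrow> real) \<Rightarrow> nat \<Rightarrow> real \<Rightarrow> real" where
  "dev_prob \<mu> a g N \<epsilon> = measure (sample_space \<mu> g N)
     {X \<in> space (sample_space \<mu> g N).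
        ennreal \<epsilon> < L1_norm \<mu> (\<lambda>x. adj_emp a N X x - adj_op \<mu> a g x)}"

end

(* By L1-continuity of x |-> a(x,.), the compact set K splits into finitely many Borel cells
   C_1, ..., C_m with centres c_j such that ||a(y,.) - a(c_j,.)||_1 <= eta on C_j. Freezing the
   kernel to a(c_j,.) on each cell and to 0 off K costs at most eta plus the mass outside K, both
   for the empirical measure and for g, so
     ||A* E_N(g) - A* g||_1 <= sum_j |E_N(C_j) - P_g(C_j)| + 2 eta + E_N(-K) + P_g(-K).
   The right-hand side involves only the m + 1 empirical frequencies of C_1, ..., C_m and -K,
   each of which concentrates exponentially by Hoeffding's inequality, with constants depending
   on eps and the partition of K but not on g. For a single g, tightness of g mu on the Polish
   space supplies a suitable K. *)

theory Submission
  imports Defs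
begin

definition empirical_freq :: "nat \<Rightarrow> (nat \<Rightarrow> 'a) \<Rightarrow> 'a set \<Rightarrow> real" where
  "empirical_freq N X C = (\<Sum>i<N. indicator C (X i)) / real N"

lemma indep_vars_PiM_coordinates:
  assumes M: "\<And>i. i \<in> I \<Longrightarrow> prob_space (M i)" and I: "I \<noteq> {}"
  shows "prob_space.indep_vars (PiM I M) M (\<lambda>i \<omega>. \<omega> i) I"
proof (subst prob_space.indep_vars_iff_distr_eq_PiM'[OF prob_space_PiM[OF M] I])
  show "(\<lambda>\<omega>. \<omega> i) \<in> measurable (PiM I M) (M i)" if "i \<in> I" for i
    using that by measurable
  have "distr (PiM I M) (PiM I M) (\<lambda>\<omega>. \<lambda>i\<in>I. \<omega> i) = distr (PiM I M) (PiM I M) (\<lambda>\<omega>. \<omega>)"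
    by (rule distr_cong) (auto simp: space_PiM PiE_def extensional_def restrict_def fun_eq_iff)
  also have "\<dots> = (\<Pi>\<^sub>M i\<in>I. distr (PiM I M) (M i) (\<lambda>\<omega>. \<omega> i))"
    by (auto intro!: PiM_cong simp: distr_PiM_component M)
  finally show "distr (PiM I M) (PiM I M) (\<lambda>\<omega>. \<lambda>i\<in>I. \<omega> i) = (\<Pi>\<^sub>M i\<in>I. distr (PiM I M) (M i) (\<lambda>\<omega>. \<omega> i))" .
qed

lemma hoeffding_empirical_freq:
  assumes M: "prob_space M" and C[measurable]: "C \<in> sets M" and N: "N \<ge> 1" and t: "t \<ge> 0"
  shows "measure (PiM {..<N} (\<lambda>_. M)) {X \<in> space (PiM {..<N} (\<lambda>_. M)).
           t \<le> \<bar>empirical_freq N X C - measure M C\<bar>} \<le> 2 * exp (- 2 * real N * t\<^sup>2)"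
proof -
  let ?P = "PiM {..<N} (\<lambda>_. M)"
  interpret Pi: product_prob_space "\<lambda>_. M" "{..<N}"
    using M by (simp add: product_prob_space_def product_sigma_finite_def prob_space_imp_sigma_finite
        product_prob_space_axioms_def)
  have coord: "distr ?P M (\<lambda>\<omega>. \<omega> i) = M" if "i < N" for i
    using distr_PiM_component[of "{..<N}" "\<lambda>_. M" i] M that by auto
  have "prob_space.indep_vars ?P (\<lambda>_. M) (\<lambda>i \<omega>. \<omega> i) {..<N}"
    by (rule indep_vars_PiM_coordinates) (use M N in \<open>auto simp: lessThan_empty_iff\<close>)
  then have indep: "prob_space.indep_vars ?P (\<lambda>_. borel) (\<lambda>i \<omega>. indicator C (\<omega> i) :: real) {..<N}"
    by (rule Pi.P.indep_vars_compose2) measurable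
  have law: "distr ?P borel (\<lambda>\<omega>. indicator C (\<omega> i) :: real) = distr M borel (indicator C)"
    if "i < N" for i
  proof -
    have "(\<lambda>\<omega>. \<omega> i) \<in> measurable ?P M"
      by (rule measurable_component_singleton) (use that in simp)
    then have "distr ?P borel (\<lambda>\<omega>. indicator C (\<omega> i) :: real) = distr (distr ?P M (\<lambda>\<omega>. \<omega> i)) borel (indicator C)"
      by (subst distr_distr) (auto simp: comp_def)
    then show ?thesis
      using coord[OF that] by simp
  qed
  interpret H: Hoeffding_ineq_iid ?P "{..<N}" "\<lambda>i \<omega>. indicator C (\<omega> i)" "\<lambda>\<omega>. indicator C (\<omega> 0)" 0 1
    "integral\<^sup>L ?P (\<lambda>\<omega>. indicator C (\<omega> 0))"
  proof unfold_locales
    have "0 \<in> {..<N}"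
      using N by simp
    then show "(\<lambda>\<omega>. indicator C (\<omega> 0) :: real) \<in> borel_measurable ?P"
      by measurable
  qed (use indep law N in auto)
  have E: "integral\<^sup>L ?P (\<lambda>\<omega>. indicator C (\<omega> 0)) = measure M C"
  proof -
    have "(\<lambda>\<omega>. \<omega> 0) \<in> measurable ?P M"
      by (rule measurable_component_singleton) (use N in simp)
    then have "integral\<^sup>L ?P (\<lambda>\<omega>. indicator C (\<omega> 0)) = integral\<^sup>L (distr ?P M (\<lambda>\<omega>. \<omega> 0)) (indicator C :: _ \<Rightarrow> real)"
      by (subst integral_distr) auto
    also have "\<dots> = measure M C"
      using coord[of 0] N by simp
    finally show ?thesis .
  qed
  show ?thesis
    using H.Hoeffding_ineq_abs_ge'[OF t] N by (simp add: E empirical_freq_def lessThan_empty_iff)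
qed

lemma empirical_freq_deviation_union_bound:
  assumes M: "prob_space M" and J: "finite J" and D: "\<And>j. j \<in> J \<Longrightarrow> D j \<in> sets M"
    and N: "N \<ge> 1" and t: "t \<ge> 0"
    and S: "S \<subseteq> {X \<in> space (PiM {..<N} (\<lambda>_. M)). \<exists>j\<in>J. t \<le> \<bar>empirical_freq N X (D j) - measure M (D j)\<bar>}"
  shows "measure (PiM {..<N} (\<lambda>_. M)) S \<le> 2 * card J * exp (- 2 * real N * t\<^sup>2)"
proof -
  let ?P = "PiM {..<N} (\<lambda>_. M)"
  interpret P: prob_space ?P
    using M by (rule prob_space_PiM)
  define E where "E j = {X \<in> space ?P. t \<le> \<bar>empirical_freq N X (D j) - measure M (D j)\<bar>}" for j
  have E: "E j \<in> sets ?P" if "j \<in> J" for j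
    using D[OF that] unfolding E_def empirical_freq_def by measurable
  have "measure ?P S \<le> measure ?P (\<Union>j\<in>J. E j)"
    using S J E by (intro P.finite_measure_mono) (auto simp: E_def)
  also have "\<dots> \<le> (\<Sum>j\<in>J. measure ?P (E j))"
    using J E by (rule measure_UNION_le)
  also have "\<dots> \<le> (\<Sum>j\<in>J. 2 * exp (- 2 * real N * t\<^sup>2))"
    unfolding E_def using M D N t by (intro sum_mono hoeffding_empirical_freq)
  finally show ?thesis
    by simp
qed

lemma compact_partition_subordinate:
  fixes K :: "'a::t2_space set"
  assumes K: "compact K" and nbhd: "\<And>x. \<exists>U. open U \<and> x \<in> U \<and> (\<forall>y\<in>U. R y x)"
  obtains C :: "nat \<Rightarrow> 'a set" and m :: nat and c :: "nat \<Rightarrow> 'a" where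
    "\<And>j. C j \<in> sets borel" "disjoint_family_on C {..<m}" "(\<Union>j<m. C j) = K"
    "\<And>j y. j < m \<Longrightarrow> y \<in> C j \<Longrightarrow> R y (c j)"
proof -
  obtain U where U: "\<And>x. open (U x)" "\<And>x. x \<in> U x" "\<And>x y. y \<in> U x \<Longrightarrow> R y x"
    using nbhd by metis
  obtain T where T: "finite T" "K \<subseteq> (\<Union>x\<in>T. U x)"
    by (rule compactE_image[OF K, of K U]) (use U in auto)
  obtain c where c: "bij_betw c {..<card T} T"
    using ex_bij_betw_nat_finite[OF T(1)] atLeast0LessThan by metis
  define C where "C j = K \<inter> U (c j) - (\<Union>l<j. U (c l))" for j
  show ?thesis
  proof
    show "C j \<in> sets borel" for j
      unfolding C_def using U(1) compact_imp_closed[OF K] by (intro sets.Diff sets.Int sets.finite_UN) auto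
    show "disjoint_family_on C {..<card T}"
      unfolding disjoint_family_on_def
    proof (intro ballI impI)
      fix i j :: nat assume "i \<noteq> j"
      then consider "i < j" | "j < i"
        by linarith
      then show "C i \<inter> C j = {}"
        by cases (auto simp: C_def)
    qed
    show "(\<Union>j<card T. C j) = K"
    proof
      show "K \<subseteq> (\<Union>j<card T. C j)"
      proof
        fix y assume y: "y \<in> K"
        then obtain x where "x \<in> T" "y \<in> U x"
          using T(2) by blast
        then obtain j0 where j0: "j0 < card T" "y \<in> U (c j0)"
          using c by (metis bij_betw_imp_surj_on imageE lessThan_iff)
        define j where "j = (LEAST j. y \<in> U (c j))"
        have "y \<in> U (c j)" "j \<le> j0"
          unfolding j_def using j0 by (auto intro: LeastI Least_le)
        moreover have "y \<notin> U (c l)" if "l < j" for l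
          using not_less_Least[of l "\<lambda>j. y \<in> U (c j)"] that unfolding j_def by auto
        ultimately show "y \<in> (\<Union>j<card T. C j)"
          unfolding C_def using y j0 by auto
      qed
    qed (auto simp: C_def)
    show "R y (c j)" if "y \<in> C j" for j y
      using that U(3) unfolding C_def by auto
  qed
qed

lemma L1_norm_add_le:
  assumes [measurable]: "f \<in> borel_measurable M" "g \<in> borel_measurable M"
  shows "L1_norm M (\<lambda>x. f x + g x) \<le> L1_norm M f + L1_norm M g"
proof -
  have "L1_norm M (\<lambda>x. f x + g x) \<le> (\<integral>\<^sup>+x. ennreal \<bar>f x\<bar> + ennreal \<bar>g x\<bar> \<partial>M)"
    unfolding L1_norm_def by (intro nn_integral_mono) (simp add: ennreal_plus[symmetric] del: ennreal_plus)
  also have "\<dots> = L1_norm M f + L1_norm M g"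
    unfolding L1_norm_def by (rule nn_integral_add) measurable
  finally show ?thesis .
qed

lemma L1_norm_diff_le:
  assumes "f \<in> borel_measurable M" "g \<in> borel_measurable M"
  shows "L1_norm M (\<lambda>x. f x - g x) \<le> L1_norm M f + L1_norm M g"
  using L1_norm_add_le[of f M "\<lambda>x. - g x"] assms by (simp add: L1_norm_def)

lemma L1_norm_sum_le:
  assumes "finite I" and "\<And>i. i \<in> I \<Longrightarrow> f i \<in> borel_measurable M"
  shows "L1_norm M (\<lambda>x. \<Sum>i\<in>I. f i x) \<le> (\<Sum>i\<in>I. L1_norm M (f i))"
  using assms
proof (induction I rule: finite_induct)
  case empty
  then show ?case by (simp add: L1_norm_def)
next
  case (insert i I)
  have "L1_norm M (\<lambda>x. \<Sum>i\<in>insert i I. f i x) = L1_norm M (\<lambda>x. f i x + (\<Sum>i\<in>I. f i x))"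
    using insert.hyps by simp
  also have "\<dots> \<le> L1_norm M (f i) + L1_norm M (\<lambda>x. \<Sum>i\<in>I. f i x)"
    using insert.prems by (intro L1_norm_add_le) auto
  also have "\<dots> \<le> L1_norm M (f i) + (\<Sum>i\<in>I. L1_norm M (f i))"
    using insert by (intro add_left_mono) auto
  finally show ?case
    using insert.hyps by simp
qed

lemma L1_norm_cmult:
  assumes "f \<in> borel_measurable M"
  shows "L1_norm M (\<lambda>x. c * f x) = ennreal \<bar>c\<bar> * L1_norm M f"
  unfolding L1_norm_def using assms by (simp add: abs_mult ennreal_mult nn_integral_cmult)

lemma L1_norm_cong_AE:
  "AE x in M. f x = g x \<Longrightarrow> L1_norm M f = L1_norm M g"
  unfolding L1_norm_def by (rule nn_integral_cong_AE) auto

lemma abs_integral_le_nn_integral_abs: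
  fixes f :: "'a \<Rightarrow> real"
  shows "ennreal \<bar>integral\<^sup>L M f\<bar> \<le> (\<integral>\<^sup>+x. ennreal \<bar>f x\<bar> \<partial>M)"
  using integral_norm_bound_ennreal[of M f] by (cases "integrable M f") (auto simp: not_integrable_integral_eq)

lemma L1_norm_integral_le:
  fixes h :: "'a \<Rightarrow> 'b \<Rightarrow> real"
  assumes "pair_sigma_finite M N" and [measurable]: "case_prod h \<in> borel_measurable (M \<Otimes>\<^sub>M N)"
  shows "L1_norm N (\<lambda>x. \<integral>y. h y x \<partial>M) \<le> (\<integral>\<^sup>+y. L1_norm N (h y) \<partial>M)"
proof -
  interpret pair_sigma_finite M N by fact
  have "L1_norm N (\<lambda>x. \<integral>y. h y x \<partial>M) \<le> (\<integral>\<^sup>+x. (\<integral>\<^sup>+y. ennreal \<bar>h y x\<bar> \<partial>M) \<partial>N)"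
    unfolding L1_norm_def by (intro nn_integral_mono abs_integral_le_nn_integral_abs)
  also have "\<dots> = (\<integral>\<^sup>+y. L1_norm N (h y) \<partial>M)"
    unfolding L1_norm_def by (rule Fubini') measurable
  finally show ?thesis .
qed

lemma measure_density_eq_integral:
  assumes [measurable]: "g \<in> borel_measurable M" "S \<in> sets M" and g_nonneg: "\<And>x. 0 \<le> g x"
  shows "measure (density M g) S = (\<integral>x. g x * indicator S x \<partial>M)"
proof -
  have "emeasure (density M g) S = (\<integral>\<^sup>+x. ennreal (g x * indicator S x) \<partial>M)"
    by (subst emeasure_density) (auto intro!: nn_integral_cong simp: indicator_def)
  then show ?thesis
    using g_nonneg by (simp add: measure_def integral_eq_nn_integral)
qed

lemma prob_space_density_prob_density:
  assumes "prob_density M g"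
  shows "prob_space (density M g)"
proof (rule prob_spaceI)
  have [measurable]: "g \<in> borel_measurable M"
    using assms unfolding prob_density_def by blast
  have "emeasure (density M g) (space M) = (\<integral>\<^sup>+x. ennreal (g x) \<partial>M)"
    by (subst emeasure_density) (auto intro!: nn_integral_cong)
  then show "emeasure (density M g) (space (density M g)) = 1"
    using assms unfolding prob_density_def by simp
qed

definition cell_kernel :: "nat \<Rightarrow> (nat \<Rightarrow> 'a set) \<Rightarrow> (nat \<Rightarrow> 'a) \<Rightarrow> ('a \<Rightarrow> 'a \<Rightarrow> real) \<Rightarrow> 'a \<Rightarrow> 'a \<Rightarrow> real" where
  "cell_kernel m C c a y x = (\<Sum>j<m. indicator (C j) y * a (c j) x)"

lemma cell_kernel_in_cell:
  assumes "disjoint_family_on C {..<m}" "j < m" "y \<in> C j"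
  shows "cell_kernel m C c a y x = a (c j) x"
proof -
  have "cell_kernel m C c a y x = (\<Sum>j'\<in>{j}. indicator (C j') y * a (c j') x)"
    unfolding cell_kernel_def using assms
    by (intro sum.mono_neutral_right) (auto simp: disjoint_family_on_def indicator_def)
  then show ?thesis
    using assms by simp
qed

lemma cell_kernel_outside_cells:
  "y \<notin> (\<Union>j<m. C j) \<Longrightarrow> cell_kernel m C c a y x = 0"
  unfolding cell_kernel_def by (auto intro!: sum.neutral)

locale density_kernel = sigma_finite_measure \<mu> for \<mu> :: "'a measure" +
  fixes a :: "'a \<Rightarrow> 'a \<Rightarrow> real"
  assumes space_UNIV: "space \<mu> = UNIV"
    and transition_density: "transition_density \<mu> a"
begin

sublocale pair_sigma_finite \<mu> \<mu> ..

lemma kernel_measurable[measurable]: "(\<lambda>p. a (fst p) (snd p)) \<in> borel_measurable (\<mu> \<Otimes>\<^sub>M \<mu>)"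
  using transition_density unfolding transition_density_def by (simp add: case_prod_unfold)

lemma kernel_measurable_swap[measurable]: "(\<lambda>p. a (snd p) (fst p)) \<in> borel_measurable (\<mu> \<Otimes>\<^sub>M \<mu>)"
  using measurable_compose[OF measurable_Pair[OF measurable_snd measurable_fst] kernel_measurable]
  by simp

lemma kernel_measurable_right[measurable]: "a y \<in> borel_measurable \<mu>"
  using measurable_compose[OF measurable_Pair1'[of y \<mu> \<mu>] kernel_measurable] space_UNIV by simp

lemma kernel_measurable_left[measurable]: "(\<lambda>y. a y x) \<in> borel_measurable \<mu>"
  using measurable_compose[OF measurable_Pair2'[of x \<mu> \<mu>] kernel_measurable] space_UNIV by simp

lemma kernel_nonneg: "0 \<le> a y x"
  using transition_density unfolding transition_density_def by blast

lemma kernel_nn_integral: "(\<integral>\<^sup>+x. ennreal (a y x) \<partial>\<mu>) = 1"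
  using transition_density space_UNIV unfolding transition_density_def by blast

lemma L1_norm_kernel: "L1_norm \<mu> (a y) = 1"
  using kernel_nn_integral kernel_nonneg by (simp add: L1_norm_def)

lemma AE_integrable_adj_op_integrand:
  assumes "prob_density \<mu> g"
  shows "AE x in \<mu>. integrable \<mu> (\<lambda>y. g y * a y x)"
proof -
  have g[measurable]: "g \<in> borel_measurable \<mu>" and g_nonneg: "\<And>x. 0 \<le> g x"
    and g_integral: "(\<integral>\<^sup>+x. ennreal (g x) \<partial>\<mu>) = 1"
    using assms unfolding prob_density_def by auto
  have "(\<integral>\<^sup>+x. (\<integral>\<^sup>+y. ennreal (g y * a y x) \<partial>\<mu>) \<partial>\<mu>) = (\<integral>\<^sup>+y. ennreal (g y) * (\<integral>\<^sup>+x. ennreal (a y x) \<partial>\<mu>) \<partial>\<mu>)"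
    by (subst Fubini') (auto intro!: nn_integral_cong simp: ennreal_mult g_nonneg kernel_nonneg nn_integral_cmult)
  also have "\<dots> = 1"
    using g_integral by (simp add: kernel_nn_integral)
  finally have "AE x in \<mu>. (\<integral>\<^sup>+y. ennreal (g y * a y x) \<partial>\<mu>) \<noteq> \<infinity>"
    by (intro nn_integral_PInf_AE) auto
  then show ?thesis
    by eventually_elim
      (auto intro!: integrableI_bounded simp: g_nonneg kernel_nonneg abs_mult top.not_eq_extremum)
qed

lemma L1_norm_kernel_combination_le:
  assumes "finite J"
  shows "L1_norm \<mu> (\<lambda>x. \<Sum>j\<in>J. w j * a (c j) x) \<le> ennreal (\<Sum>j\<in>J. \<bar>w j\<bar>)"
proof -
  have "L1_norm \<mu> (\<lambda>x. \<Sum>j\<in>J. w j * a (c j) x) \<le> (\<Sum>j\<in>J. L1_norm \<mu> (\<lambda>x. w j * a (c j) x))"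
    using assms by (intro L1_norm_sum_le) auto
  also have "\<dots> = ennreal (\<Sum>j\<in>J. \<bar>w j\<bar>)"
    by (simp add: L1_norm_cmult L1_norm_kernel sum_ennreal)
  finally show ?thesis .
qed

end

locale kernel_partition = density_kernel +
  fixes K :: "'a set" and \<eta> :: real and m :: nat and C :: "nat \<Rightarrow> 'a set" and c :: "nat \<Rightarrow> 'a"
  assumes cells_measurable[measurable]: "\<And>j. C j \<in> sets \<mu>"
    and cells_disjoint: "disjoint_family_on C {..<m}"
    and cells_cover: "(\<Union>j<m. C j) = K"
    and cells_close: "\<And>j y. j < m \<Longrightarrow> y \<in> C j \<Longrightarrow> L1_norm \<mu> (\<lambda>x. a y x - a (c j) x) \<le> ennreal \<eta>"
    and eta_nonneg: "0 \<le> \<eta>"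
begin

definition residual :: "'a \<Rightarrow> 'a \<Rightarrow> real" where
  "residual y x = a y x - cell_kernel m C c a y x"

lemma K_measurable[measurable]: "K \<in> sets \<mu>" "- K \<in> sets \<mu>"
proof -
  show "K \<in> sets \<mu>"
    unfolding cells_cover[symmetric] by measurable
  then show "- K \<in> sets \<mu>"
    using sets.compl_sets[of K \<mu>] space_UNIV by (simp add: Compl_eq_Diff_UNIV)
qed

lemma residual_measurable[measurable]:
  "case_prod residual \<in> borel_measurable (\<mu> \<Otimes>\<^sub>M \<mu>)"
  "(\<lambda>p. residual (snd p) (fst p)) \<in> borel_measurable (\<mu> \<Otimes>\<^sub>M \<mu>)"
  "residual y \<in> borel_measurable \<mu>"
  unfolding residual_def cell_kernel_def case_prod_unfold by measurable

lemma L1_norm_residual_le: "L1_norm \<mu> (residual y) \<le> ennreal \<eta> + indicator (- K) y"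
proof (cases "y \<in> K")
  case True
  then obtain j where "j < m" "y \<in> C j"
    using cells_cover by auto
  then show ?thesis
    using cells_disjoint cells_close True by (simp add: residual_def[abs_def] cell_kernel_in_cell)
next
  case False
  then show ?thesis
    using cells_cover by (simp add: residual_def[abs_def] cell_kernel_outside_cells L1_norm_kernel)
qed

lemma L1_norm_empirical_residual_le:
  "L1_norm \<mu> (\<lambda>x. (\<Sum>i<N. residual (X i) x) / real N) \<le> ennreal (\<eta> + empirical_freq N X (- K))"
proof -
  have "L1_norm \<mu> (\<lambda>x. (\<Sum>i<N. residual (X i) x) / real N)
      = ennreal (1 / real N) * L1_norm \<mu> (\<lambda>x. \<Sum>i<N. residual (X i) x)"
    using L1_norm_cmult[of "\<lambda>x. \<Sum>i<N. residual (X i) x" \<mu> "1 / real N"] by simp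
  also have "\<dots> \<le> ennreal (1 / real N) * (\<Sum>i<N. ennreal \<eta> + indicator (- K) (X i))"
    by (intro mult_left_mono order_trans[OF L1_norm_sum_le] sum_mono L1_norm_residual_le) auto
  also have "(\<Sum>i<N. ennreal \<eta> + indicator (- K) (X i)) = (\<Sum>i<N. ennreal (\<eta> + indicator (- K) (X i)))"
    using eta_nonneg by (simp add: ennreal_indicator)
  also have "\<dots> = ennreal (\<Sum>i<N. \<eta> + indicator (- K) (X i))"
    using eta_nonneg by (intro sum_ennreal) simp
  also have "ennreal (1 / real N) * \<dots> = ennreal ((\<Sum>i<N. \<eta> + indicator (- K) (X i)) / real N)"
    using eta_nonneg by (simp add: ennreal_mult[symmetric] sum_nonneg)
  also have "\<dots> \<le> ennreal (\<eta> + empirical_freq N X (- K))"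
    using eta_nonneg by (intro ennreal_leI) (simp add: empirical_freq_def sum.distrib add_divide_distrib)
  finally show ?thesis .
qed

lemma L1_norm_mixture_residual_le:
  assumes "prob_density \<mu> g"
  shows "L1_norm \<mu> (\<lambda>x. \<integral>y. g y * residual y x \<partial>\<mu>) \<le> ennreal (\<eta> + measure (density \<mu> g) (- K))"
proof -
  have g[measurable]: "g \<in> borel_measurable \<mu>" and g_nonneg: "\<And>x. 0 \<le> g x"
    and g_integral: "(\<integral>\<^sup>+x. ennreal (g x) \<partial>\<mu>) = 1"
    using assms unfolding prob_density_def by auto
  interpret g: prob_space "density \<mu> g"
    using assms by (rule prob_space_density_prob_density)
  have "L1_norm \<mu> (\<lambda>x. \<integral>y. g y * residual y x \<partial>\<mu>) \<le> (\<integral>\<^sup>+y. L1_norm \<mu> (\<lambda>x. g y * residual y x) \<partial>\<mu>)"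
    by (rule L1_norm_integral_le) (unfold_locales, measurable)
  also have "\<dots> \<le> (\<integral>\<^sup>+y. ennreal (g y) * (ennreal \<eta> + indicator (- K) y) \<partial>\<mu>)"
    by (intro nn_integral_mono) (simp add: L1_norm_cmult g_nonneg mult_left_mono L1_norm_residual_le)
  also have "\<dots> = ennreal \<eta> * (\<integral>\<^sup>+y. ennreal (g y) \<partial>\<mu>) + emeasure (density \<mu> g) (- K)"
    by (simp add: distrib_left nn_integral_add nn_integral_cmult emeasure_density mult.commute)
  also have "\<dots> = ennreal (\<eta> + measure (density \<mu> g) (- K))"
    using eta_nonneg by (simp add: g_integral g.emeasure_eq_measure ennreal_plus)
  finally show ?thesis .
qed

lemma adj_emp_eq_cell_kernel_plus_residual:
  "adj_emp a N X x = (\<Sum>j<m. empirical_freq N X (C j) * a (c j) x) + (\<Sum>i<N. residual (X i) x) / real N"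
proof -
  have "(\<Sum>j<m. empirical_freq N X (C j) * a (c j) x) = (\<Sum>i<N. cell_kernel m C c a (X i) x) / real N"
    unfolding empirical_freq_def cell_kernel_def sum_divide_distrib sum_distrib_right
    by (subst sum.swap) simp
  then show ?thesis
    by (simp add: adj_emp_def residual_def sum_subtractf diff_divide_distrib)
qed

lemma adj_op_eq_cell_kernel_plus_residual:
  assumes g: "prob_density \<mu> g" and int: "integrable \<mu> (\<lambda>y. g y * a y x)"
  shows "adj_op \<mu> a g x = (\<Sum>j<m. measure (density \<mu> g) (C j) * a (c j) x) + (\<integral>y. g y * residual y x \<partial>\<mu>)"
proof -
  have [measurable]: "g \<in> borel_measurable \<mu>" and g_nonneg: "\<And>x. 0 \<le> g x"
    and g_integral: "(\<integral>\<^sup>+x. ennreal (g x) \<partial>\<mu>) = 1"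
    using g unfolding prob_density_def by auto
  have "integrable \<mu> g"
    using g_integral g_nonneg by (intro integrableI_bounded) auto
  then have int_cell_j: "integrable \<mu> (\<lambda>y. g y * indicator (C j) y)" for j
    by (rule integrable_real_mult_indicator[OF cells_measurable])
  have cell: "(\<lambda>y. g y * cell_kernel m C c a y x) = (\<lambda>y. \<Sum>j<m. a (c j) x * (g y * indicator (C j) y))"
    unfolding cell_kernel_def sum_distrib_left by (intro ext sum.cong) (simp_all add: mult_ac)
  have int_cell: "integrable \<mu> (\<lambda>y. g y * cell_kernel m C c a y x)"
    unfolding cell using int_cell_j by auto
  have "(\<integral>y. g y * cell_kernel m C c a y x \<partial>\<mu>) = (\<Sum>j<m. measure (density \<mu> g) (C j) * a (c j) x)"
    unfolding cell using int_cell_j g_nonneg by (simp add: measure_density_eq_integral mult.commute)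
  moreover have "(\<integral>y. g y * a y x \<partial>\<mu>) = (\<integral>y. g y * cell_kernel m C c a y x \<partial>\<mu>) + (\<integral>y. g y * residual y x \<partial>\<mu>)"
    using int int_cell by (simp add: residual_def right_diff_distrib)
  ultimately show ?thesis
    by (simp add: adj_op_def)
qed

lemma AE_deviation_eq:
  assumes "prob_density \<mu> g"
  shows "AE x in \<mu>. adj_emp a N X x - adj_op \<mu> a g x =
      (\<Sum>j<m. (empirical_freq N X (C j) - measure (density \<mu> g) (C j)) * a (c j) x)
      + (\<Sum>i<N. residual (X i) x) / real N - (\<integral>y. g y * residual y x \<partial>\<mu>)"
  using AE_integrable_adj_op_integrand[OF assms]
proof eventually_elim
  case (elim x)
  then show ?case
    using assms by (simp add: adj_emp_eq_cell_kernel_plus_residual adj_op_eq_cell_kernel_plus_residual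
        left_diff_distrib sum_subtractf)
qed

lemma L1_deviation_le:
  assumes "prob_density \<mu> g"
  shows "L1_norm \<mu> (\<lambda>x. adj_emp a N X x - adj_op \<mu> a g x) \<le>
    ennreal ((\<Sum>j<m. \<bar>empirical_freq N X (C j) - measure (density \<mu> g) (C j)\<bar>) + 2 * \<eta>
      + empirical_freq N X (- K) + measure (density \<mu> g) (- K))"
proof -
  have [measurable]: "g \<in> borel_measurable \<mu>"
    using assms unfolding prob_density_def by blast
  define d where "d j = empirical_freq N X (C j) - measure (density \<mu> g) (C j)" for j
  have "L1_norm \<mu> (\<lambda>x. adj_emp a N X x - adj_op \<mu> a g x) =
      L1_norm \<mu> (\<lambda>x. (\<Sum>j<m. d j * a (c j) x) + (\<Sum>i<N. residual (X i) x) / real N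
        - (\<integral>y. g y * residual y x \<partial>\<mu>))"
    unfolding d_def by (rule L1_norm_cong_AE[OF AE_deviation_eq[OF assms]])
  also have "\<dots> \<le> L1_norm \<mu> (\<lambda>x. (\<Sum>j<m. d j * a (c j) x) + (\<Sum>i<N. residual (X i) x) / real N)
      + L1_norm \<mu> (\<lambda>x. \<integral>y. g y * residual y x \<partial>\<mu>)"
    by (rule L1_norm_diff_le) measurable
  also have "\<dots> \<le> (L1_norm \<mu> (\<lambda>x. \<Sum>j<m. d j * a (c j) x) + L1_norm \<mu> (\<lambda>x. (\<Sum>i<N. residual (X i) x) / real N))
      + L1_norm \<mu> (\<lambda>x. \<integral>y. g y * residual y x \<partial>\<mu>)"
    by (intro add_right_mono L1_norm_add_le) measurable
  also have "\<dots> \<le> ennreal (\<Sum>j<m. \<bar>d j\<bar>) + ennreal (\<eta> + empirical_freq N X (- K))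
      + ennreal (\<eta> + measure (density \<mu> g) (- K))"
    by (intro add_mono L1_norm_kernel_combination_le L1_norm_empirical_residual_le
        L1_norm_mixture_residual_le assms) simp
  also have "\<dots> = ennreal ((\<Sum>j<m. \<bar>d j\<bar>) + 2 * \<eta> + empirical_freq N X (- K) + measure (density \<mu> g) (- K))"
    using eta_nonneg by (simp add: ennreal_plus[symmetric] sum_nonneg empirical_freq_def del: ennreal_plus)
  finally show ?thesis
    unfolding d_def .
qed

lemma frequency_deviation_if_L1_deviation:
  assumes g: "prob_density \<mu> g"
    and big: "ennreal ((real m + 1) * t + 2 * \<eta> + 2 * measure (density \<mu> g) (- K))
      < L1_norm \<mu> (\<lambda>x. adj_emp a N X x - adj_op \<mu> a g x)"
  shows "(\<exists>j<m. t < \<bar>empirical_freq N X (C j) - measure (density \<mu> g) (C j)\<bar>)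
    \<or> t < \<bar>empirical_freq N X (- K) - measure (density \<mu> g) (- K)\<bar>"
proof (rule ccontr)
  assume "\<not> ?thesis"
  then have close: "\<And>j. j < m \<Longrightarrow> \<bar>empirical_freq N X (C j) - measure (density \<mu> g) (C j)\<bar> \<le> t"
    and close_K: "\<bar>empirical_freq N X (- K) - measure (density \<mu> g) (- K)\<bar> \<le> t"
    by auto
  have "(\<Sum>j<m. \<bar>empirical_freq N X (C j) - measure (density \<mu> g) (C j)\<bar>) \<le> real m * t"
    using sum_bounded_above[of "{..<m}" "\<lambda>j. \<bar>empirical_freq N X (C j) - measure (density \<mu> g) (C j)\<bar>" t]
      close by simp
  then have "L1_norm \<mu> (\<lambda>x. adj_emp a N X x - adj_op \<mu> a g x) \<le>
      ennreal ((real m + 1) * t + 2 * \<eta> + 2 * measure (density \<mu> g) (- K))"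
    using close_K by (intro order_trans[OF L1_deviation_le[OF g]] ennreal_leI) (auto simp: algebra_simps)
  with big show False
    by simp
qed

end

lemma L1_continuous_kernel_nhds:
  assumes "L1_continuous_kernel \<mu> a" and "\<eta> > 0"
  shows "\<exists>U. open U \<and> x \<in> U \<and> (\<forall>y\<in>U. L1_norm \<mu> (\<lambda>x'. a y x' - a x x') \<le> ennreal \<eta>)"
proof -
  have "eventually (\<lambda>y. L1_norm \<mu> (\<lambda>x'. a y x' - a x x') < ennreal \<eta>) (at x)"
    using assms unfolding L1_continuous_kernel_def L1_norm_def by (intro order_tendstoD(2)) auto
  then obtain U where "open U" "x \<in> U" "\<forall>y\<in>U. y \<noteq> x \<longrightarrow> L1_norm \<mu> (\<lambda>x'. a y x' - a x x') < ennreal \<eta>"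
    unfolding eventually_at_topological by blast
  then show ?thesis
    by (intro exI[of _ U]) (auto simp: L1_norm_def)
qed

lemma prob_density_tight:
  fixes \<mu> :: "'a::polish_space measure"
  assumes sets_\<mu>: "sets \<mu> = sets borel" and g: "prob_density \<mu> g" and r: "r < 1"
  obtains K where "compact K" "ennreal r \<le> (\<integral>\<^sup>+x\<in>K. ennreal (g x) \<partial>\<mu>)"
proof -
  interpret prob_space "density \<mu> g"
    using g by (rule prob_space_density_prob_density)
  have g_meas: "g \<in> borel_measurable \<mu>"
    using g unfolding prob_density_def by blast
  have "ennreal r < emeasure (density \<mu> g) UNIV"
    using r sets_eq_imp_space_eq[OF sets_\<mu>] emeasure_space_1 by (simp add: ennreal_less_one_iff)
  also have "\<dots> = (SUP K \<in> {K. K \<subseteq> UNIV \<and> compact K}. emeasure (density \<mu> g) K)"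
    by (rule inner_regular) (use sets_\<mu> in auto)
  finally obtain K where "compact K" "ennreal r < emeasure (density \<mu> g) K"
    by (auto simp: less_SUP_iff)
  moreover have "emeasure (density \<mu> g) K = (\<integral>\<^sup>+x\<in>K. ennreal (g x) \<partial>\<mu>)"
    using g_meas compact_imp_closed[OF \<open>compact K\<close>] sets_\<mu> by (intro emeasure_density) auto
  ultimately show ?thesis
    using that by (metis less_imp_le)
qed

lemma measure_density_compl_le:
  assumes g: "prob_density M g" and K: "K \<in> sets M" and "space M = UNIV"
    and gK: "ennreal (1 - \<delta>) \<le> (\<integral>\<^sup>+ x \<in> K. ennreal (g x) \<partial>M)"
  shows "measure (density M g) (- K) \<le> \<delta>"
proof -
  interpret prob_space "density M g"
    using g by (rule prob_space_density_prob_density)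
  have "emeasure (density M g) K = (\<integral>\<^sup>+ x \<in> K. ennreal (g x) \<partial>M)"
    using g K unfolding prob_density_def by (intro emeasure_density) auto
  then have "ennreal (1 - \<delta>) \<le> ennreal (measure (density M g) K)"
    using gK by (simp add: emeasure_eq_measure)
  then have "1 - \<delta> \<le> measure (density M g) K"
    by (simp add: ennreal_le_iff)
  moreover have "measure (density M g) (- K) = 1 - measure (density M g) K"
    using prob_compl[of K] K \<open>space M = UNIV\<close> by (simp add: Compl_eq_Diff_UNIV)
  ultimately show ?thesis
    by simp
qed

lemma (in kernel_partition) dev_prob_le:
  assumes g: "prob_density \<mu> g" and gK: "(\<integral>\<^sup>+ x \<in> K. ennreal (g x) \<partial>\<mu>) \<ge> ennreal (1 - \<epsilon> / 6)"
    and N: "N \<ge> 1" and \<epsilon>: "\<epsilon> > 0" and \<eta>: "12 * \<eta> \<le> \<epsilon>"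
  defines "t \<equiv> \<epsilon> / (4 * (real m + 1))"
  shows "dev_prob \<mu> a g N \<epsilon> \<le> 2 * (real m + 1) * exp (- (2 * t\<^sup>2) * real N)"
proof -
  define D where "D j = (if j < m then C j else - K)" for j
  have "t > 0"
    using \<epsilon> by (simp add: t_def)
  let ?M = "density \<mu> g"
  let ?P = "PiM {..<N} (\<lambda>_. ?M)"
  interpret M: prob_space ?M
    using g by (rule prob_space_density_prob_density)
  have "measure ?M (- K) \<le> \<epsilon> / 6"
    using g K_measurable(1) space_UNIV gK by (rule measure_density_compl_le)
  moreover have "(real m + 1) * t = \<epsilon> / 4"
    unfolding t_def by (simp add: field_simps add_pos_nonneg)
  \<comment> \<open>the frequencies contribute \<open>\<epsilon>/4\<close>, \<open>2\<eta>\<close> at most \<open>\<epsilon>/6\<close>, the mass outside \<open>K\<close> at most \<open>\<epsilon>/3\<close>\<close>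
  ultimately have small: "(real m + 1) * t + 2 * \<eta> + 2 * measure ?M (- K) < \<epsilon>"
    using \<epsilon> \<eta> by linarith
  have "{X \<in> space ?P. ennreal \<epsilon> < L1_norm \<mu> (\<lambda>x. adj_emp a N X x - adj_op \<mu> a g x)}
      \<subseteq> {X \<in> space ?P. \<exists>j\<in>{..m}. t \<le> \<bar>empirical_freq N X (D j) - measure ?M (D j)\<bar>}"
  proof safe
    fix X assume "ennreal \<epsilon> < L1_norm \<mu> (\<lambda>x. adj_emp a N X x - adj_op \<mu> a g x)"
    then have "ennreal ((real m + 1) * t + 2 * \<eta> + 2 * measure ?M (- K))
        < L1_norm \<mu> (\<lambda>x. adj_emp a N X x - adj_op \<mu> a g x)"
      using small by (meson ennreal_leI less_imp_le order.strict_trans1)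
    then have "(\<exists>j<m. t < \<bar>empirical_freq N X (C j) - measure ?M (C j)\<bar>)
        \<or> t < \<bar>empirical_freq N X (- K) - measure ?M (- K)\<bar>"
      by (rule frequency_deviation_if_L1_deviation[OF g])
    then show "\<exists>j\<in>{..m}. t \<le> \<bar>empirical_freq N X (D j) - measure ?M (D j)\<bar>"
    proof (elim disjE exE conjE)
      fix j assume "j < m" "t < \<bar>empirical_freq N X (C j) - measure ?M (C j)\<bar>"
      then show ?thesis
        by (intro bexI[of _ j]) (simp_all add: D_def)
    next
      assume "t < \<bar>empirical_freq N X (- K) - measure ?M (- K)\<bar>"
      then show ?thesis
        by (intro bexI[of _ m]) (simp_all add: D_def)
    qed
  qed
  moreover have "D j \<in> sets ?M" for j
    using cells_measurable K_measurable by (simp add: D_def)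
  ultimately have "dev_prob \<mu> a g N \<epsilon> \<le> 2 * card {..m} * exp (- 2 * real N * t\<^sup>2)"
    unfolding dev_prob_def sample_space_def using N \<open>t > 0\<close>
    by (intro empirical_freq_deviation_union_bound M.prob_space_axioms) auto
  then show ?thesis
    by (simp add: algebra_simps)
qed

lemma dev_prob_exponential_bound_on_compact:
  fixes \<mu> :: "'a::t2_space measure" and a :: "'a \<Rightarrow> 'a \<Rightarrow> real"
  assumes sets_\<mu>: "sets \<mu> = sets borel" and "sigma_finite_measure \<mu>"
    and "transition_density \<mu> a" and cont: "L1_continuous_kernel \<mu> a"
    and \<epsilon>: "\<epsilon> > 0" and K: "compact K"
  shows "\<exists>c1 c2. c1 > 0 \<and> c2 > 0 \<and>
           (\<forall>g N. prob_density \<mu> g \<longrightarrow>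
              (\<integral>\<^sup>+ x \<in> K. ennreal (g x) \<partial>\<mu>) \<ge> ennreal (1 - \<epsilon> / 6) \<longrightarrow>
              N \<ge> 1 \<longrightarrow> dev_prob \<mu> a g N \<epsilon> \<le> c1 * exp (- c2 * real N))"
proof -
  have "\<epsilon> / 12 > 0"
    using \<epsilon> by simp
  show ?thesis
  proof (rule compact_partition_subordinate[OF K L1_continuous_kernel_nhds[OF cont \<open>\<epsilon> / 12 > 0\<close>]])
    fix C :: "nat \<Rightarrow> 'a set" and m :: nat and c :: "nat \<Rightarrow> 'a"
    assume "\<And>j. C j \<in> sets borel" "disjoint_family_on C {..<m}" "(\<Union>j<m. C j) = K"
      and "\<And>j y. j < m \<Longrightarrow> y \<in> C j \<Longrightarrow> L1_norm \<mu> (\<lambda>x'. a y x' - a (c j) x') \<le> ennreal (\<epsilon> / 12)"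
    then interpret kernel_partition \<mu> a K "\<epsilon> / 12" m C c
      using assms sets_eq_imp_space_eq[OF sets_\<mu>]
      by (simp add: kernel_partition_def kernel_partition_axioms_def density_kernel_def density_kernel_axioms_def)
    show ?thesis
      using dev_prob_le \<epsilon> by (intro exI[of _ "2 * (real m + 1)"] exI[of _ "2 * (\<epsilon> / (4 * (real m + 1)))\<^sup>2"]) auto
  qed
qed

theorem lemma8:
  fixes \<mu> :: "'a::polish_space measure" and a :: "'a \<Rightarrow> 'a \<Rightarrow> real"
  assumes sets_mu: "sets \<mu> = sets borel"
    and sf: "sigma_finite_measure \<mu>"
    and td: "transition_density \<mu> a"
    and cont: "L1_continuous_kernel \<mu> a"
  shows "(\<forall>g \<epsilon>. prob_density \<mu> g \<longrightarrow> \<epsilon> > 0 \<longrightarrow>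
            (\<exists>c1 c2. c1 > 0 \<and> c2 > 0 \<and>
               (\<forall>N\<ge>1. dev_prob \<mu> a g N \<epsilon> \<le> c1 * exp (- c2 * real N))))
       \<and> (\<forall>\<epsilon> K. \<epsilon> > 0 \<longrightarrow> compact K \<longrightarrow>
            (\<exists>c1 c2. c1 > 0 \<and> c2 > 0 \<and>
               (\<forall>g N. prob_density \<mu> g \<longrightarrow>
                   (\<integral>\<^sup>+ x \<in> K. ennreal (g x) \<partial>\<mu>) \<ge> ennreal (1 - \<epsilon> / 6) \<longrightarrow>
                   N \<ge> 1 \<longrightarrow>
                   dev_prob \<mu> a g N \<epsilon> \<le> c1 * exp (- c2 * real N))))"
proof (intro conjI allI impI)
  fix g and \<epsilon> :: real
  assume g: "prob_density \<mu> g" and \<epsilon>: "\<epsilon> > 0"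
  obtain K where K: "compact K" "ennreal (1 - \<epsilon> / 6) \<le> (\<integral>\<^sup>+x\<in>K. ennreal (g x) \<partial>\<mu>)"
    using prob_density_tight[OF sets_mu g, of "1 - \<epsilon> / 6"] \<epsilon> by auto
  show "\<exists>c1 c2. c1 > 0 \<and> c2 > 0 \<and> (\<forall>N\<ge>1. dev_prob \<mu> a g N \<epsilon> \<le> c1 * exp (- c2 * real N))"
    using dev_prob_exponential_bound_on_compact[OF assms \<epsilon> K(1)] g K(2) by blast
next
  fix \<epsilon> :: real and K :: "'a set"
  assume "\<epsilon> > 0" "compact K"
  then show "\<exists>c1 c2. c1 > 0 \<and> c2 > 0 \<and>
               (\<forall>g N. prob_density \<mu> g \<longrightarrow>
                   (\<integral>\<^sup>+ x \<in> K. ennreal (g x) \<partial>\<mu>) \<ge> ennreal (1 - \<epsilon> / 6) \<longrightarrow>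
                   N \<ge> 1 \<longrightarrow> dev_prob \<mu> a g N \<epsilon> \<le> c1 * exp (- c2 * real N))"
    by (rule dev_prob_exponential_bound_on_compact[OF assms])
qed

end
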